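(* Let $T:\mathbb{Z}_{\ge 0}\to\mathbb{R}$ satisfy $T(mn) = T(m)T(n) + T(m-1)T(n-1)$ for all integers $m,n\ge 1$. If $T(0)\neq 0$, then $T(n)=\tfrac12$ for all $n\ge 0$. *)

theory Defs
  imports Complex_Main
begin

end

theory Submission
  imports Defs
begin

text \<open>Taking \<open>m = 1\<close> gives \<open>T 0 * T (n - 1) = (1 - T 1) * T n\<close>; at \<open>n = 1\<close> this reads
  \<open>T 0\<^sup>2 = (1 - T 1) * T 1\<close>, so \<open>T 1 \<noteq> 1\<close> and \<open>T\<close> is geometric, \<open>T n = a * c ^ n\<close>.
  The two remaining relations, \<open>a\<^sup>2 = (1 - a c) a c\<close> and the case \<open>m = n = 2\<close>, force
  \<open>c = 1\<close> and \<open>a = 1/2\<close>.\<close>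

lemma geometric_sequence:
  fixes T :: "nat \<Rightarrow> 'a::monoid_mult"
  assumes "\<And>n. T (Suc n) = c * T n"
  shows "T n = c ^ n * T 0"
  by (induction n) (simp_all add: assms mult.assoc)

lemma geometric_solution_constants:
  fixes a c :: "'a::field_char_0"
  assumes a: "a \<noteq> 0"
    and at_one: "a\<^sup>2 = (1 - a * c) * (a * c)"
    and at_four: "a * c ^ 4 = (a * c\<^sup>2)\<^sup>2 + (a * c)\<^sup>2"
  shows "c = 1" and "a = 1 / 2"
proof -
  have c: "c \<noteq> 0"
    using a at_one by auto
  have "a * (a - c * (1 - a * c)) = 0"
    using at_one by (simp add: power2_eq_square algebra_simps)
  with a have a_eq: "a = c * (1 - a * c)"
    by simp
  have "a * c\<^sup>2 * (c\<^sup>2 - a * c\<^sup>2 - a) = 0"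
    using at_four by (simp add: power2_eq_square power4_eq_xxxx algebra_simps)
  with a c have "c\<^sup>2 - a * c\<^sup>2 - a = 0"
    by simp
  then have "c\<^sup>2 = a * (c\<^sup>2 + 1)"
    by (simp add: algebra_simps)
  also have "\<dots> = c + (a - c * (1 - a * c))"
    by (simp add: power2_eq_square algebra_simps)
  also have "\<dots> = c"
    using a_eq by simp
  finally show c1: "c = 1"
    using c by (simp add: power2_eq_square)
  show "a = 1 / 2"
    using a_eq unfolding c1 by (simp add: field_simps)
qed

theorem lemma8:
  fixes T :: "nat \<Rightarrow> real"
  assumes rec: "\<And>m n. m \<ge> 1 \<Longrightarrow> n \<ge> 1 \<Longrightarrow> T (m * n) = T m * T n + T (m - 1) * T (n - 1)"
    and nz: "T 0 \<noteq> 0"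
  shows "\<forall>n. T n = 1 / 2"
proof -
  have step: "(1 - T 1) * T (Suc n) = T 0 * T n" for n
    using rec[of 1 "Suc n"] by (simp add: algebra_simps)
  have at_one: "(T 0)\<^sup>2 = (1 - T 1) * T 1"
    using step[of 0] by (simp add: power2_eq_square)
  with nz have "1 - T 1 \<noteq> 0"
    by auto
  define c where "c = T 0 / (1 - T 1)"
  have "T (Suc n) = c * T n" for n
    using step[of n] \<open>1 - T 1 \<noteq> 0\<close> by (simp add: c_def field_simps)
  then have geom: "T n = T 0 * c ^ n" for n
    using geometric_sequence[of T c n] by (simp add: mult.commute)
  have "T 4 = (T 2)\<^sup>2 + (T 1)\<^sup>2"
    using rec[of 2 2] by (simp add: power2_eq_square)
  then have at_four: "T 0 * c ^ 4 = (T 0 * c\<^sup>2)\<^sup>2 + (T 0 * c)\<^sup>2"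
    by (simp only: geom[of 4] geom[of 2] geom[of 1] power_one_right)
  from at_one have "(T 0)\<^sup>2 = (1 - T 0 * c) * (T 0 * c)"
    by (simp only: geom[of 1] power_one_right)
  note params = geometric_solution_constants[OF nz this at_four]
  show ?thesis
    using geom params by simp
qed

end
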